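(* Let $\mathcal{G}=(V,L)$ be a finite connected undirected graph with monitor set $M$ and non-monitor set $N=V\setminus M$, $\sigma=|N|$, and let $P$ be a given set of measurement paths between monitors (Uncontrollable Probing). Then for every $v\in N$, the maximum identifiability index of $v$ satisfies $\mathrm{MSC}(v)-1\le\Omega_{\mathrm{UP}}(v)\le\mathrm{MSC}(v)$.
   Context: Failure model: a failure set is any $F\subseteq N$; a path fails iff it traverses a node of $F$. $P_F$ is the set of paths in $P$ traversing a node of $F$; $F_1,F_2$ distinguishable iff $P_{F_1}\ne P_{F_2}$. $S\subseteq N$ is $k$-identifiable if any two failure sets $F_1,F_2$ with $|F_1|,|F_2|\le k$ and $F_1\cap S\ne F_2\cap S$ are distinguishable (every set is trivially $0$-identifiable). $\Omega(v)$ is the maximum $k\in\{0,\dots,\sigma\}$ such that $\{v\}$ is $k$-identifiable. For $v\in N$, $P_v$ is the set of paths in $P$ traversing $v$. $\mathrm{MSC}(v)$ is the minimum cardinality of a set $V'\subseteq N\setminus\{v\}$ with $P_v\subseteq\bigcup_{w\in V'}P_w$; if no such $V'$ exists (e.g. when $v$ lies on a two-hop measurement path monitor–$v$–monitor), $\mathrm{MSC}(v):=\sigma$. *)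

theory Defs
  imports Main
begin

definition undirected_graph :: "'a set \<Rightarrow> ('a \<Rightarrow> 'a \<Rightarrow> bool) \<Rightarrow> bool" where
  "undirected_graph V E \<longleftrightarrow>
     (\<forall>u w. E u w \<longrightarrow> u \<in> V \<and> w \<in> V) \<and>
     (\<forall>u w. E u w \<longrightarrow> E w u) \<and>
     (\<forall>u. \<not> E u u)"

definition connected_graph :: "'a set \<Rightarrow> ('a \<Rightarrow> 'a \<Rightarrow> bool) \<Rightarrow> bool" where
  "connected_graph V E \<longleftrightarrow> (\<forall>u\<in>V. \<forall>w\<in>V. E\<^sup>*\<^sup>* u w)"

definition is_path :: "'a set \<Rightarrow> ('a \<Rightarrow> 'a \<Rightarrow> bool) \<Rightarrow> 'a list \<Rightarrow> bool" where
  "is_path V E p \<longleftrightarrow> p \<noteq> [] \<and> set p \<subseteq> V \<and> distinct p \<and>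
     (\<forall>i. Suc i < length p \<longrightarrow> E (p ! i) (p ! Suc i))"

definition measurement_path :: "'a set \<Rightarrow> ('a \<Rightarrow> 'a \<Rightarrow> bool) \<Rightarrow> 'a set \<Rightarrow> 'a list \<Rightarrow> bool" where
  "measurement_path V E M p \<longleftrightarrow> is_path V E p \<and> hd p \<in> M \<and> last p \<in> M"

definition paths_through :: "'a list set \<Rightarrow> 'a set \<Rightarrow> 'a list set" where
  "paths_through P F = {p \<in> P. \<exists>u\<in>set p. u \<in> F}"

definition k_identifiable :: "'a set \<Rightarrow> 'a list set \<Rightarrow> 'a set \<Rightarrow> nat \<Rightarrow> bool" where
  "k_identifiable N P S k \<longleftrightarrow>
     (\<forall>F1 F2. F1 \<subseteq> N \<longrightarrow> F2 \<subseteq> N \<longrightarrow> card F1 \<le> k \<longrightarrow> card F2 \<le> k \<longrightarrow>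
        F1 \<inter> S \<noteq> F2 \<inter> S \<longrightarrow> paths_through P F1 \<noteq> paths_through P F2)"

definition Omega :: "'a set \<Rightarrow> 'a list set \<Rightarrow> 'a \<Rightarrow> nat" where
  "Omega N P v = Max {k. k \<le> card N \<and> k_identifiable N P {v} k}"

definition MSC :: "'a set \<Rightarrow> 'a list set \<Rightarrow> 'a \<Rightarrow> nat" where
  "MSC N P v =
     (if \<exists>V'. V' \<subseteq> N - {v} \<and> paths_through P {v} \<subseteq> (\<Union>w\<in>V'. paths_through P {w})
      then Min {card V' | V'. V' \<subseteq> N - {v} \<and>
                 paths_through P {v} \<subseteq> (\<Union>w\<in>V'. paths_through P {w})}
      else card N)"

end

theory Submission
  imports Defs
begin

text \<open>A set \<open>V'\<close> of other non-monitors covering the paths through \<open>v\<close> witnesses that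
  \<open>V'\<close> and \<open>V' \<union> {v}\<close> fail on the same paths although they differ at \<open>v\<close>; so \<open>{v}\<close> is not
  \<open>(|V'| + 1)\<close>-identifiable, and \<open>\<Omega>(v) \<le> MSC(v)\<close>. Conversely, if two failure sets differing
  at \<open>v\<close> fail on the same paths, the one avoiding \<open>v\<close> covers the paths through \<open>v\<close>, so it has
  at least \<open>MSC(v)\<close> nodes; hence \<open>{v}\<close> is \<open>(MSC(v) - 1)\<close>-identifiable. Only the finiteness of
  \<open>N\<close> enters.\<close>

definition covers :: "'a set \<Rightarrow> 'a list set \<Rightarrow> 'a \<Rightarrow> 'a set set" where
  "covers N P v = {V'. V' \<subseteq> N - {v} \<and> paths_through P {v} \<subseteq> paths_through P V'}"

lemma UN_paths_through_singleton: "(\<Union>w\<in>F. paths_through P {w}) = paths_through P F"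
  unfolding paths_through_def by auto

lemma paths_through_insert:
  "paths_through P (insert v F) = paths_through P {v} \<union> paths_through P F"
  unfolding paths_through_def by auto

lemma paths_through_mono: "F \<subseteq> G \<Longrightarrow> paths_through P F \<subseteq> paths_through P G"
  unfolding paths_through_def by auto

lemma MSC_covers:
  "MSC N P v = (if covers N P v = {} then card N else Min (card ` covers N P v))"
proof -
  have "{card V' | V'. V' \<subseteq> N - {v} \<and> paths_through P {v} \<subseteq> paths_through P V'}
      = card ` covers N P v"
    unfolding covers_def by blast
  moreover have "(\<exists>V'. V' \<subseteq> N - {v} \<and> paths_through P {v} \<subseteq> paths_through P V')
      \<longleftrightarrow> covers N P v \<noteq> {}"
    unfolding covers_def by blast
  ultimately show ?thesis
    unfolding MSC_def UN_paths_through_singleton by presburger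
qed

lemma finite_card_covers: "finite N \<Longrightarrow> finite (card ` covers N P v)"
  unfolding covers_def by (rule finite_imageI, rule finite_subset[of _ "Pow N"]) auto

lemma MSC_le_cover: "finite N \<Longrightarrow> V' \<in> covers N P v \<Longrightarrow> MSC N P v \<le> card V'"
  by (auto simp: MSC_covers intro: Min_le finite_card_covers)

lemma MSC_attained:
  assumes "finite N" and "covers N P v \<noteq> {}"
  obtains V' where "V' \<in> covers N P v" and "card V' = MSC N P v"
proof -
  have "MSC N P v \<in> card ` covers N P v"
    using Min_in[OF finite_card_covers[OF assms(1)]] assms(2) by (simp add: MSC_covers)
  with that show thesis by auto
qed

lemma MSC_le_card: "finite N \<Longrightarrow> MSC N P v \<le> card N"
proof (cases "covers N P v = {}")
  case False
  assume "finite N"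
  then obtain V' where "V' \<in> covers N P v" and "card V' = MSC N P v"
    using False by (rule MSC_attained)
  then have "V' \<subseteq> N"
    unfolding covers_def by auto
  with \<open>finite N\<close> \<open>card V' = MSC N P v\<close> show ?thesis
    by (metis card_mono)
qed (simp add: MSC_covers)

lemma k_identifiable_mono:
  "k_identifiable N P S k \<Longrightarrow> j \<le> k \<Longrightarrow> k_identifiable N P S j"
  unfolding k_identifiable_def by (meson le_trans)

lemma k_identifiable_0: "finite N \<Longrightarrow> k_identifiable N P S 0"
  unfolding k_identifiable_def by (auto dest: finite_subset)

lemma not_k_identifiable_Suc_card_cover:
  assumes "v \<in> N" and cover: "V' \<in> covers N P v" and "finite V'"
  shows "\<not> k_identifiable N P {v} (Suc (card V'))"
proof
  assume ident: "k_identifiable N P {v} (Suc (card V'))"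
  from cover have V': "V' \<subseteq> N - {v}" "paths_through P {v} \<subseteq> paths_through P V'"
    unfolding covers_def by auto
  have "V' \<subseteq> N" "insert v V' \<subseteq> N"
    using V'(1) \<open>v \<in> N\<close> by auto
  moreover have "card V' \<le> Suc (card V')" "card (insert v V') \<le> Suc (card V')"
    using \<open>finite V'\<close> V'(1) by (simp_all add: card_insert_le_m1)
  moreover have "V' \<inter> {v} \<noteq> insert v V' \<inter> {v}"
    using V'(1) by auto
  ultimately have "paths_through P V' \<noteq> paths_through P (insert v V')"
    by (rule ident[unfolded k_identifiable_def, rule_format])
  moreover have "paths_through P (insert v V') = paths_through P V'"
    using V'(2) by (subst paths_through_insert) blast
  ultimately show False
    by simp
qed

lemma k_identifiable_below_covers:
  assumes "\<forall>V'\<in>covers N P v. k < card V'"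
  shows "k_identifiable N P {v} k"
  unfolding k_identifiable_def
proof (intro allI impI)
  have no_small_cover: False
    if "A \<subseteq> N" "card A \<le> k" "v \<notin> A" "v \<in> B" "paths_through P A = paths_through P B" for A B
  proof -
    have "paths_through P {v} \<subseteq> paths_through P B"
      using \<open>v \<in> B\<close> by (intro paths_through_mono) simp
    with that have "A \<in> covers N P v"
      unfolding covers_def by auto
    with assms \<open>card A \<le> k\<close> show False by auto
  qed
  fix F1 F2
  assume "F1 \<subseteq> N" "F2 \<subseteq> N" "card F1 \<le> k" "card F2 \<le> k" "F1 \<inter> {v} \<noteq> F2 \<inter> {v}"
  then consider "v \<notin> F1" "v \<in> F2" | "v \<notin> F2" "v \<in> F1"
    by blast
  then show "paths_through P F1 \<noteq> paths_through P F2"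
  proof cases
    case 1
    then show ?thesis using no_small_cover \<open>F1 \<subseteq> N\<close> \<open>card F1 \<le> k\<close> by blast
  next
    case 2
    then show ?thesis using no_small_cover \<open>F2 \<subseteq> N\<close> \<open>card F2 \<le> k\<close> by blast
  qed
qed

lemma k_identifiable_le_MSC:
  assumes "finite N" and "v \<in> N"
    and "k_identifiable N P {v} k" and "k \<le> card N"
  shows "k \<le> MSC N P v"
proof (cases "covers N P v = {}")
  case True
  with assms(4) show ?thesis by (simp add: MSC_covers)
next
  case False
  with assms(1) obtain V' where cover: "V' \<in> covers N P v" and "card V' = MSC N P v"
    by (rule MSC_attained)
  have "finite V'"
    using cover assms(1) unfolding covers_def by (auto dest: finite_subset)
  show ?thesis
  proof (rule ccontr)
    assume "\<not> k \<le> MSC N P v"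
    then have "k_identifiable N P {v} (Suc (card V'))"
      using \<open>card V' = MSC N P v\<close> by (intro k_identifiable_mono[OF assms(3)]) simp
    with not_k_identifiable_Suc_card_cover[OF assms(2) cover \<open>finite V'\<close>] show False ..
  qed
qed

lemma k_identifiable_MSC_minus_1:
  assumes "finite N"
  shows "k_identifiable N P {v} (MSC N P v - 1)"
proof (cases "MSC N P v = 0")
  case True
  with assms show ?thesis by (simp add: k_identifiable_0)
next
  case False
  have "MSC N P v - 1 < card V'" if "V' \<in> covers N P v" for V'
    using MSC_le_cover[OF assms that] False by simp
  then show ?thesis
    by (intro k_identifiable_below_covers) blast
qed

lemma
  assumes "finite N"
  shows Omega_greatest: "k \<le> card N \<Longrightarrow> k_identifiable N P {v} k \<Longrightarrow> k \<le> Omega N P v"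
    and Omega_le_card: "Omega N P v \<le> card N"
    and k_identifiable_Omega: "k_identifiable N P {v} (Omega N P v)"
proof -
  let ?K = "{k. k \<le> card N \<and> k_identifiable N P {v} k}"
  have "finite ?K" by (rule finite_subset[of _ "{..card N}"]) auto
  moreover have "0 \<in> ?K" using assms by (simp add: k_identifiable_0)
  ultimately have "Omega N P v \<in> ?K"
    unfolding Omega_def by (intro Max_in) auto
  then show "Omega N P v \<le> card N" "k_identifiable N P {v} (Omega N P v)" by auto
  show "k \<le> card N \<Longrightarrow> k_identifiable N P {v} k \<Longrightarrow> k \<le> Omega N P v"
    unfolding Omega_def using \<open>finite ?K\<close> by (intro Max_ge) auto
qed

theorem theorem6:
  fixes V :: "'a set" and E :: "'a \<Rightarrow> 'a \<Rightarrow> bool" and M N :: "'a set"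
    and P :: "'a list set" and v :: 'a
  assumes "finite V"
    and "undirected_graph V E"
    and "connected_graph V E"
    and "M \<subseteq> V"
    and "N = V - M"
    and "\<forall>p\<in>P. measurement_path V E M p"
    and "v \<in> N"
  shows "int (MSC N P v) - 1 \<le> int (Omega N P v) \<and> Omega N P v \<le> MSC N P v"
proof -
  have "finite N" using assms(1,5) by simp
  have "MSC N P v - 1 \<le> Omega N P v"
    using MSC_le_card[OF \<open>finite N\<close>, of P v]
    by (intro Omega_greatest k_identifiable_MSC_minus_1 \<open>finite N\<close>) simp
  moreover have "Omega N P v \<le> MSC N P v"
    using \<open>finite N\<close> \<open>v \<in> N\<close>
    by (intro k_identifiable_le_MSC k_identifiable_Omega Omega_le_card)
  ultimately show ?thesis by linarith
qed

end
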